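(* Fix $\gamma>0$ and $b\in(0,1)$, and let $u(x)$ be the germ at $x=0$ with $u(0)=0$ determined by $u=x\bigl(1+\gamma u\log(1-bu)\bigr)$, where $\log(1-bu)$ is the branch with $\log(1-bu)\sim-bu$ as $u\to0$. Let $\rho_*$ be the radius of analyticity of this germ. Then $1-bu(x)\neq0$ for $|x|<\rho_*$, so the logarithm continued from $0$ defines a holomorphic function $\ell(x)=\log(1-bu(x))$ on $|x|<\rho_*$ with $x=u(x)/(1+\gamma u(x)\ell(x))$. If $\rho_*<\infty$, then every boundary point $x_0$ with $|x_0|=\rho_*$ across which the germ does not continue analytically satisfies: there exist $u_0\in\mathbb C\setminus\{0,1/b\}$ and a local holomorphic branch $\ell_u$ of $\log(1-bu)$ near $u_0$ (a limit of values $\ell(x_n)$ along some sequence $x_n\to x_0$ with $u(x_n)\to u_0$) such that, with $X_{\ell_u}(u)=u/(1+\gamma u\,\ell_u(u))$, one has $X_{\ell_u}(u_0)=x_0\ne0$ and $X'_{\ell_u}(u_0)=0$. *)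

theory Defs
  imports "HOL-Complex_Analysis.Complex_Analysis"
begin

text \<open>A germ at 0 of a solution of u = x (1 + gamma u log(1 - b u)) with u(0) = 0,
  where the logarithm is the principal branch Ln (which satisfies Ln(1 - b u) ~ - b u
  as u tends to 0).\<close>
definition is_sol_germ :: "real \<Rightarrow> real \<Rightarrow> (complex \<Rightarrow> complex) \<Rightarrow> bool" where
  "is_sol_germ \<gamma> b u \<longleftrightarrow> u 0 = 0 \<and>
     (\<exists>\<epsilon>>0. u holomorphic_on ball 0 \<epsilon> \<and>
        (\<forall>x\<in>ball 0 \<epsilon>. u x = x * (1 + of_real \<gamma> * u x * Ln (1 - of_real b * u x))))"

definition analytic_radius :: "(complex \<Rightarrow> complex) \<Rightarrow> ereal" where
  "analytic_radius u = Sup {ereal r | r. r > 0 \<and> (\<exists>f. f holomorphic_on ball 0 r \<and>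
       (\<exists>\<delta>>0. \<forall>x\<in>ball 0 \<delta>. f x = u x))}"

definition edisc :: "ereal \<Rightarrow> complex set" where
  "edisc \<rho> = {x. ereal (cmod x) < \<rho>}"

end

theory Submission
  imports Defs
begin

text \<open>
  The germ continues to the disc D of radius \<rho> = analytic_radius u. On any disc around 0 on
  which 1 - b u has no zero, 1 - b u has a holomorphic logarithm L with L(0) = 0; near 0 it is
  the principal logarithm, so by analytic continuation u = x (1 + \<gamma> u L), i.e.
  L = (1/x - 1/u)/\<gamma> wherever x \<noteq> 0. Approaching a zero z of 1 - b u of least modulus from
  inside, this formula gives L a finite limit whose exponential would be 1 - b u(z) = 0. Hence
  1 - b u has no zero on D, and L exists on all of D.

  Let x0 be a boundary point across which u does not continue. If u tended to 0 at x0, then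
  L = Ln(1 - b u) + c near x0 would tend to c, and 1/u = 1/x - \<gamma> L would stay bounded. So
  |u| \<ge> \<epsilon> along a sequence tending to x0; along a subsequence 1/u converges, hence so do
  L = (1/x - 1/u)/\<gamma> and u = (1 - exp L)/b, to l0 and u0 \<noteq> 0 with exp l0 = 1 - b u0. With the
  branch \<ell> of log(1 - b w) near u0 taking the value l0 at u0, X(w) = w/(1 + \<gamma> w \<ell>(w)) maps u0
  to x0 and inverts u along the sequence. If X'(u0) \<noteq> 0, the local inverse of X would agree
  with u on an open set near x0 and so continue u across x0.
\<close>

section \<open>Continuation of the germ to its disc of analyticity\<close>

lemma edisc_ereal: "edisc (ereal R) = ball 0 R"
  by (auto simp: edisc_def)

lemma open_edisc: "open (edisc \<rho>)"
  unfolding edisc_def by (intro open_Collect_less continuous_intros)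

lemma convex_edisc: "convex (edisc \<rho>)"
proof (cases \<rho>)
  case (real r)
  then show ?thesis by (simp add: edisc_ereal)
qed (simp_all add: edisc_def)

lemma edisc_norm_le: "x \<in> edisc \<rho> \<Longrightarrow> norm y \<le> norm x \<Longrightarrow> y \<in> edisc \<rho>"
  unfolding edisc_def using order.strict_trans1[of "ereal (norm y)" "ereal (norm x)" \<rho>] by simp

definition continues_germ :: "(complex \<Rightarrow> complex) \<Rightarrow> complex set \<Rightarrow> (complex \<Rightarrow> complex) \<Rightarrow> bool"
  where "continues_germ u S f \<longleftrightarrow> f holomorphic_on S \<and> (\<exists>\<delta>>0. \<forall>x\<in>ball 0 \<delta>. f x = u x)"

lemma analytic_radius_eq_Sup:
  "analytic_radius u = Sup (ereal ` {r. r > 0 \<and> (\<exists>f. continues_germ u (ball 0 r) f)})"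
  unfolding analytic_radius_def continues_germ_def by (rule arg_cong[where f = Sup]) auto

lemma continues_germ_ball_unique:
  assumes f: "continues_germ u (ball 0 r) f" and g: "continues_germ u (ball 0 r') g"
    and "x \<in> ball 0 r" "x \<in> ball 0 r'"
  shows "f x = g x"
proof -
  obtain \<delta>f \<delta>g where "\<delta>f > 0" and \<delta>f: "\<forall>x\<in>ball 0 \<delta>f. f x = u x"
    and "\<delta>g > 0" and \<delta>g: "\<forall>x\<in>ball 0 \<delta>g. g x = u x"
    using f g unfolding continues_germ_def by blast
  have "min r r' > 0"
    using assms(3,4) le_less_trans[OF norm_ge_zero, of x] by simp
  show ?thesis
  proof (rule analytic_continuation_open[of "ball 0 (min (min \<delta>f \<delta>g) (min r r'))" "ball 0 (min r r')" f g])
    show "f holomorphic_on ball 0 (min r r')" "g holomorphic_on ball 0 (min r r')"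
      using f g unfolding continues_germ_def by (auto intro: holomorphic_on_subset)
  qed (use assms \<open>\<delta>f > 0\<close> \<open>\<delta>g > 0\<close> \<open>min r r' > 0\<close> \<delta>f \<delta>g in auto)
qed

lemma continuation_to_analytic_radius:
  assumes "\<epsilon> > 0" "u holomorphic_on ball 0 \<epsilon>"
  shows "ereal \<epsilon> \<le> analytic_radius u" and "\<exists>U. continues_germ u (edisc (analytic_radius u)) U"
proof -
  define Rs where "Rs = {r. r > 0 \<and> (\<exists>f. continues_germ u (ball 0 r) f)}"
  define F where "F r = (SOME f. continues_germ u (ball 0 r) f)" for r
  have F: "continues_germ u (ball 0 r) (F r)" if "r \<in> Rs" for r
    using that unfolding Rs_def F_def by (auto intro: someI[of "continues_germ u (ball 0 r)"])
  have "\<epsilon> \<in> Rs"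
    using assms unfolding Rs_def continues_germ_def by auto
  then show "ereal \<epsilon> \<le> analytic_radius u"
    unfolding analytic_radius_eq_Sup Rs_def[symmetric] by (simp add: Sup_upper)
  define U where "U x = F (SOME r. r \<in> Rs \<and> norm x < r) x" for x
  have U_eq_F: "U x = F r x" if "r \<in> Rs" "x \<in> ball 0 r" for r x
  proof -
    define r' where "r' = (SOME r. r \<in> Rs \<and> norm x < r)"
    have "r' \<in> Rs" "x \<in> ball 0 r'"
      unfolding r'_def using someI[of "\<lambda>r. r \<in> Rs \<and> norm x < r" r] that by auto
    then show ?thesis
      unfolding U_def r'_def[symmetric] using F that by (blast intro: continues_germ_ball_unique)
  qed
  have disc: "edisc (analytic_radius u) = (\<Union>r\<in>Rs. ball 0 r)"
    unfolding analytic_radius_eq_Sup Rs_def[symmetric] edisc_def by (auto simp: less_Sup_iff)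
  have "U holomorphic_on (\<Union>r\<in>Rs. ball 0 r)"
  proof (rule holomorphic_on_UN_open)
    fix r assume "r \<in> Rs"
    then show "U holomorphic_on ball 0 r"
      using F U_eq_F holomorphic_cong unfolding continues_germ_def by metis
  qed simp
  moreover obtain \<delta> where "\<delta> > 0" "\<forall>x\<in>ball 0 \<delta>. F \<epsilon> x = u x"
    using F[OF \<open>\<epsilon> \<in> Rs\<close>] unfolding continues_germ_def by blast
  then have "\<forall>x\<in>ball 0 (min \<delta> \<epsilon>). U x = u x"
    using U_eq_F[OF \<open>\<epsilon> \<in> Rs\<close>] by simp
  ultimately have "continues_germ u (\<Union>r\<in>Rs. ball 0 r) U"
    unfolding continues_germ_def using \<open>\<delta> > 0\<close> assms(1) by (intro conjI exI[of _ "min \<delta> \<epsilon>"]) auto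
  then show "\<exists>U. continues_germ u (edisc (analytic_radius u)) U"
    unfolding disc by blast
qed

section \<open>Solutions carrying a holomorphic logarithm\<close>

lemma one_minus_notin_nonpos_Reals:
  fixes z :: complex
  assumes "norm z < 1"
  shows "1 - z \<notin> \<real>\<^sub>\<le>\<^sub>0"
proof -
  have "Re z < 1"
    using assms complex_Re_le_cmod le_less_trans by blast
  then show ?thesis
    by (auto simp: complex_nonpos_Reals_iff)
qed

lemma continuous_logs_differ_by_constant:
  fixes f g :: "'a::topological_space \<Rightarrow> complex"
  assumes "connected S" "continuous_on S f" "continuous_on S g"
    and exp_eq: "\<And>x. x \<in> S \<Longrightarrow> exp (f x) = exp (g x)"
  obtains c where "\<And>x. x \<in> S \<Longrightarrow> f x = g x + c"
proof -
  have "(\<lambda>x. f x - g x) constant_on S"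
  proof (rule continuous_discrete_range_constant)
    fix x assume x: "x \<in> S"
    have "pi \<le> norm (f y - g y - (f x - g x))" if "y \<in> S" "f y - g y \<noteq> f x - g x" for y
    proof -
      have "exp (f y - g y) = exp (f x - g x)"
        using exp_eq[OF x] exp_eq[OF that(1)] by (simp add: exp_diff)
      then have "f y - g y \<notin> ball (f x - g x) pi"
        using inj_on_exp_pi[of "f x - g x"] that(2) by (auto simp: inj_on_def)
      then show ?thesis
        by (simp add: dist_norm norm_minus_commute)
    qed
    then show "\<exists>e>0. \<forall>y. y \<in> S \<and> f y - g y \<noteq> f x - g x \<longrightarrow> e \<le> norm (f y - g y - (f x - g x))"
      by (intro exI[of _ pi]) auto
  qed (use assms in \<open>auto intro: continuous_intros\<close>)
  then obtain c where c: "\<And>x. x \<in> S \<Longrightarrow> f x - g x = c"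
    unfolding constant_on_def by blast
  show ?thesis
  proof (rule that)
    show "f x = g x + c" if "x \<in> S" for x
      using c[OF that] by (simp add: algebra_simps)
  qed
qed

lemma continuous_log_eq_Ln_plus_const:
  fixes f L :: "'a::topological_space \<Rightarrow> complex"
  assumes "connected S" "continuous_on S f" "continuous_on S L"
    and "\<And>x. x \<in> S \<Longrightarrow> exp (L x) = 1 - f x" and "\<And>x. x \<in> S \<Longrightarrow> norm (f x) < 1"
  obtains c where "\<And>x. x \<in> S \<Longrightarrow> L x = Ln (1 - f x) + c"
proof -
  have "1 - f x \<noteq> 0" if "x \<in> S" for x
    using assms(5)[OF that] by auto
  then have "exp (L x) = exp (Ln (1 - f x))" if "x \<in> S" for x
    using assms(4) that by simp
  moreover have "continuous_on S (\<lambda>x. Ln (1 - f x))"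
    using assms(2,5) one_minus_notin_nonpos_Reals by (intro continuous_intros) auto
  ultimately show ?thesis
    using continuous_logs_differ_by_constant[OF assms(1,3)] that by blast
qed

lemma log_eq_Ln_near_zero:
  fixes f L :: "complex \<Rightarrow> complex"
  assumes "open S" "0 \<in> S" "continuous_on S f" "f 0 = 0" "continuous_on S L" "L 0 = 0"
    and exp_L: "\<And>x. x \<in> S \<Longrightarrow> exp (L x) = 1 - f x"
  obtains \<eta> where "\<eta> > 0" "ball 0 \<eta> \<subseteq> S" "\<And>x. x \<in> ball 0 \<eta> \<Longrightarrow> L x = Ln (1 - f x)"
proof -
  have "open (S \<inter> f -` ball 0 1)"
    using assms(3,1) by (rule continuous_open_preimage) simp
  moreover have "0 \<in> S \<inter> f -` ball 0 1"
    using assms(2,4) by simp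
  ultimately obtain \<eta> where "\<eta> > 0" and \<eta>: "ball 0 \<eta> \<subseteq> S \<inter> f -` ball 0 1"
    by (rule openE)
  obtain c where c: "\<And>x. x \<in> ball 0 \<eta> \<Longrightarrow> L x = Ln (1 - f x) + c"
  proof (rule continuous_log_eq_Ln_plus_const)
    show "continuous_on (ball 0 \<eta>) f" "continuous_on (ball 0 \<eta>) L"
      using \<eta> assms(3,5) by (auto intro: continuous_on_subset)
    show "exp (L x) = 1 - f x" "norm (f x) < 1" if "x \<in> ball 0 \<eta>" for x
      using that \<eta> exp_L by auto
  qed (auto intro: that)
  have "c = 0"
    using c[of 0] \<open>\<eta> > 0\<close> assms(4,6) by simp
  show ?thesis
    by (rule that[OF \<open>\<eta> > 0\<close>]) (use \<eta> c \<open>c = 0\<close> in auto)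
qed

lemma zero_of_least_norm:
  fixes f :: "'a::{real_normed_vector,heine_borel} \<Rightarrow> 'b::real_normed_vector"
  assumes "continuous_on (cball 0 r) f" "z \<in> cball 0 r" "f z = 0"
  obtains z1 where "z1 \<in> cball 0 r" "f z1 = 0" "\<And>y. norm y < norm z1 \<Longrightarrow> f y \<noteq> 0"
proof -
  define K where "K = cball 0 r \<inter> f -` {0}"
  have "compact K"
    unfolding K_def compact_eq_bounded_closed using assms(1)
    by (auto intro: bounded_Int continuous_closed_preimage)
  moreover have "z \<in> K"
    using assms(2,3) unfolding K_def by simp
  ultimately obtain z1 where z1: "z1 \<in> K" and least: "\<And>y. y \<in> K \<Longrightarrow> norm z1 \<le> norm y"
    using continuous_attains_inf[of K norm] by (auto intro: continuous_intros)
  have nonzero: "f y \<noteq> 0" if "norm y < norm z1" for y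
  proof
    assume "f y = 0"
    moreover have "norm y \<le> r"
      using that z1 unfolding K_def by auto
    ultimately have "y \<in> K"
      unfolding K_def by auto
    with least that show False
      by fastforce
  qed
  show ?thesis
    by (rule that[of z1]) (use z1 nonzero in \<open>auto simp: K_def\<close>)
qed

definition log_solution ::
    "real \<Rightarrow> real \<Rightarrow> complex set \<Rightarrow> (complex \<Rightarrow> complex) \<Rightarrow> (complex \<Rightarrow> complex) \<Rightarrow> bool"
  where "log_solution \<gamma> b S U L \<longleftrightarrow>
    (\<forall>x\<in>S. exp (L x) = 1 - of_real b * U x \<and> U x = x * (1 + of_real \<gamma> * U x * L x))"

lemma log_solution_denominator_nonzero:
  assumes "log_solution \<gamma> b S U L" "x \<in> S"
  shows "1 + of_real \<gamma> * U x * L x \<noteq> 0"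
proof
  assume den: "1 + of_real \<gamma> * U x * L x = 0"
  have "U x = x * (1 + of_real \<gamma> * U x * L x)"
    using assms unfolding log_solution_def by blast
  with den have "U x = 0"
    by simp
  with den show False
    by simp
qed

lemma log_solution_inverse:
  assumes "log_solution \<gamma> b S U L" "x \<in> S"
  shows "x = U x / (1 + of_real \<gamma> * U x * L x)"
  using log_solution_denominator_nonzero[OF assms] assms
  unfolding log_solution_def by (simp add: field_simps)

lemma log_solution_pointwise:
  assumes "log_solution \<gamma> b S U L"
  shows "\<forall>x\<in>S. 1 - of_real b * U x \<noteq> 0 \<and> exp (L x) = 1 - of_real b * U x \<and>
           x = U x / (1 + of_real \<gamma> * U x * L x)"
  using assms log_solution_inverse[OF assms] unfolding log_solution_def by (metis exp_not_eq_zero)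

lemma log_solution_L_eq:
  assumes "log_solution \<gamma> b S U L" "x \<in> S" "x \<noteq> 0" "\<gamma> \<noteq> 0"
  shows "U x \<noteq> 0" and "L x = (1 / x - 1 / U x) / of_real \<gamma>"
proof -
  have eq: "U x = x * (1 + of_real \<gamma> * U x * L x)"
    using assms(1,2) unfolding log_solution_def by blast
  then show "U x \<noteq> 0"
    using assms(3) by auto
  moreover have "U x - x = of_real \<gamma> * L x * (x * U x)"
    using eq by algebra
  ultimately show "L x = (1 / x - 1 / U x) / of_real \<gamma>"
    using assms(3,4) by (simp add: field_simps)
qed

lemma log_solution_tendsto:
  fixes xs :: "'a \<Rightarrow> complex"
  assumes sol: "log_solution \<gamma> b S U L" and "\<gamma> \<noteq> 0" "F \<noteq> bot"
    and in_S: "eventually (\<lambda>n. xs n \<in> S) F"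
    and xs: "(xs \<longlongrightarrow> x0) F" and U: "((\<lambda>n. U (xs n)) \<longlongrightarrow> u0) F" and "x0 \<noteq> 0" "u0 \<noteq> 0"
  shows "((\<lambda>n. L (xs n)) \<longlongrightarrow> (1 / x0 - 1 / u0) / of_real \<gamma>) F" (is "(_ \<longlongrightarrow> ?l) F")
    and "exp ((1 / x0 - 1 / u0) / of_real \<gamma>) = 1 - of_real b * u0"
proof -
  have "eventually (\<lambda>n. xs n \<in> S \<and> xs n \<noteq> 0) F"
    using in_S tendsto_imp_eventually_ne[OF xs \<open>x0 \<noteq> 0\<close>] by (rule eventually_conj)
  then have "eventually (\<lambda>n. (1 / xs n - 1 / U (xs n)) / of_real \<gamma> = L (xs n)) F"
    by (rule eventually_mono) (use log_solution_L_eq[OF sol] \<open>\<gamma> \<noteq> 0\<close> in auto)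
  moreover have "((\<lambda>n. (1 / xs n - 1 / U (xs n)) / of_real \<gamma>) \<longlongrightarrow> ?l) F"
    using xs U assms(2,7,8) by (intro tendsto_intros) auto
  ultimately show L: "((\<lambda>n. L (xs n)) \<longlongrightarrow> ?l) F"
    by (rule Lim_transform_eventually[rotated])
  have "((\<lambda>n. exp (L (xs n))) \<longlongrightarrow> exp ?l) F"
    using L by (rule tendsto_exp)
  moreover have "((\<lambda>n. 1 - of_real b * U (xs n)) \<longlongrightarrow> 1 - of_real b * u0) F"
    using U by (intro tendsto_intros)
  moreover have "eventually (\<lambda>n. 1 - of_real b * U (xs n) = exp (L (xs n))) F"
    using in_S by (rule eventually_mono) (use sol in \<open>simp add: log_solution_def\<close>)
  ultimately show "exp ?l = 1 - of_real b * u0"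
    using tendsto_unique[OF \<open>F \<noteq> bot\<close>] Lim_transform_eventually by metis
qed

lemma log_solution_exists:
  assumes S: "convex S" "open S" "0 \<in> S" and U: "U holomorphic_on S"
    and nonzero: "\<And>x. x \<in> S \<Longrightarrow> 1 - of_real b * U x \<noteq> 0"
    and "\<delta> > 0"
    and germ: "\<And>x. x \<in> ball 0 \<delta> \<Longrightarrow> U x = x * (1 + of_real \<gamma> * U x * Ln (1 - of_real b * U x))"
  obtains L where "L holomorphic_on S" "L 0 = 0" "log_solution \<gamma> b S U L"
proof -
  have U0: "U 0 = 0"
    using germ[of 0] \<open>\<delta> > 0\<close> by simp
  have "(\<lambda>x. 1 - of_real b * U x) holomorphic_on S"
    using U by (intro holomorphic_intros)
  obtain g where g: "g holomorphic_on S" "\<And>x. x \<in> S \<Longrightarrow> exp (g x) = 1 - of_real b * U x"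
    using holomorphic_logarithm_exists[OF S(1,2) \<open>(\<lambda>x. 1 - of_real b * U x) holomorphic_on S\<close> nonzero S(3)]
    by blast
  define L where "L x = g x - g 0" for x
  have L_holo: "L holomorphic_on S"
    unfolding L_def using g(1) by (intro holomorphic_intros)
  have L_exp: "exp (L x) = 1 - of_real b * U x" if "x \<in> S" for x
    unfolding L_def using g(2)[OF that] g(2)[OF S(3)] U0 by (simp add: exp_diff)
  have "L 0 = 0"
    unfolding L_def by simp
  obtain \<eta> where "\<eta> > 0" "ball 0 \<eta> \<subseteq> S" and L_Ln: "\<And>x. x \<in> ball 0 \<eta> \<Longrightarrow> L x = Ln (1 - of_real b * U x)"
  proof (rule log_eq_Ln_near_zero[of S "\<lambda>x. of_real b * U x" L])
    show "continuous_on S (\<lambda>x. of_real b * U x)"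
      using holomorphic_on_imp_continuous_on[OF U] by (intro continuous_intros)
  qed (use S U0 \<open>L 0 = 0\<close> L_exp holomorphic_on_imp_continuous_on[OF L_holo] that in auto)
  have "U x = x * (1 + of_real \<gamma> * U x * L x)" if "x \<in> S" for x
  proof (rule analytic_continuation_open[of "ball 0 (min \<eta> \<delta>)" S U "\<lambda>x. x * (1 + of_real \<gamma> * U x * L x)"])
    show "U z = z * (1 + of_real \<gamma> * U z * L z)" if "z \<in> ball 0 (min \<eta> \<delta>)" for z
      using that germ L_Ln by simp
    show "(\<lambda>x. x * (1 + of_real \<gamma> * U x * L x)) holomorphic_on S"
      using U L_holo by (intro holomorphic_intros)
  qed (use S U that \<open>\<eta> > 0\<close> \<open>\<delta> > 0\<close> \<open>ball 0 \<eta> \<subseteq> S\<close> convex_connected in auto)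
  then show ?thesis
    using that L_holo \<open>L 0 = 0\<close> L_exp unfolding log_solution_def by blast
qed

lemma solution_avoids_branch_point:
  assumes "\<gamma> \<noteq> 0" and U: "U holomorphic_on edisc \<rho>" and "\<delta> > 0"
    and germ: "\<And>x. x \<in> ball 0 \<delta> \<Longrightarrow> U x = x * (1 + of_real \<gamma> * U x * Ln (1 - of_real b * U x))"
    and "x \<in> edisc \<rho>"
  shows "1 - of_real b * U x \<noteq> 0"
proof
  assume "1 - of_real b * U x = 0"
  have "continuous_on (cball 0 (norm x)) (\<lambda>y. 1 - of_real b * U y)"
    using holomorphic_on_imp_continuous_on[OF U] edisc_norm_le[OF \<open>x \<in> edisc \<rho>\<close>]
    by (auto intro!: continuous_intros intro: continuous_on_subset)
  then obtain z where z: "z \<in> cball 0 (norm x)" "1 - of_real b * U z = 0"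
    and least: "\<And>y. norm y < norm z \<Longrightarrow> 1 - of_real b * U y \<noteq> 0"
    using zero_of_least_norm[of "norm x" "\<lambda>y. 1 - of_real b * U y" x] \<open>1 - of_real b * U x = 0\<close>
    by auto
  have "z \<in> edisc \<rho>"
    using z(1) edisc_norm_le[OF \<open>x \<in> edisc \<rho>\<close>] by simp
  have "U 0 = 0"
    using germ[of 0] \<open>\<delta> > 0\<close> by simp
  then have "z \<noteq> 0" "U z \<noteq> 0"
    using z(2) by auto
  define S where "S = ball (0::complex) (norm z)"
  obtain L where sol: "log_solution \<gamma> b S U L"
  proof (rule log_solution_exists[of S U b \<delta> \<gamma>])
    show "U holomorphic_on S"
      using U edisc_norm_le[OF \<open>z \<in> edisc \<rho>\<close>] unfolding S_def by (auto intro: holomorphic_on_subset)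
  qed (use \<open>z \<noteq> 0\<close> least germ \<open>\<delta> > 0\<close> in \<open>auto simp: S_def\<close>)
  have "isCont U z"
    using holomorphic_on_imp_continuous_on[OF U] \<open>z \<in> edisc \<rho>\<close>
    by (simp add: continuous_on_eq_continuous_at[OF open_edisc])
  have "exp ((1 / z - 1 / U z) / of_real \<gamma>) = 1 - of_real b * U z"
  proof (rule log_solution_tendsto(2)[OF sol \<open>\<gamma> \<noteq> 0\<close>])
    show "at z within S \<noteq> bot"
      using \<open>z \<noteq> 0\<close> by (simp add: S_def trivial_limit_within islimpt_ball)
    show "((\<lambda>y. U y) \<longlongrightarrow> U z) (at z within S)"
      using \<open>isCont U z\<close> by (simp add: isCont_def Lim_at_imp_Lim_at_within)
  qed (use \<open>z \<noteq> 0\<close> \<open>U z \<noteq> 0\<close> in \<open>auto simp: eventually_at_filter\<close>)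
  with z(2) show False
    by simp
qed

lemma solution_on_analytic_disc:
  assumes "\<gamma> \<noteq> 0" "is_sol_germ \<gamma> b u"
  obtains U L where "analytic_radius u > 0" "continues_germ u (edisc (analytic_radius u)) U"
    "L holomorphic_on edisc (analytic_radius u)" "L 0 = 0"
    "log_solution \<gamma> b (edisc (analytic_radius u)) U L"
proof -
  obtain \<epsilon> where "\<epsilon> > 0" "u holomorphic_on ball 0 \<epsilon>"
    and u_eq: "\<forall>x\<in>ball 0 \<epsilon>. u x = x * (1 + of_real \<gamma> * u x * Ln (1 - of_real b * u x))"
    using assms(2) unfolding is_sol_germ_def by blast
  note radius = continuation_to_analytic_radius[OF this(1,2)]
  then obtain U \<delta> where U: "U holomorphic_on edisc (analytic_radius u)"
    and "\<delta> > 0" and U_eq: "\<forall>x\<in>ball 0 \<delta>. U x = u x"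
    unfolding continues_germ_def by blast
  have pos: "analytic_radius u > 0"
    using radius(1) \<open>\<epsilon> > 0\<close> by (metis ereal_less(2) order_less_le_trans)
  then have "0 \<in> edisc (analytic_radius u)"
    by (simp add: edisc_def zero_ereal_def)
  have "min \<delta> \<epsilon> > 0"
    using \<open>\<delta> > 0\<close> \<open>\<epsilon> > 0\<close> by simp
  have germ: "U x = x * (1 + of_real \<gamma> * U x * Ln (1 - of_real b * U x))"
    if "x \<in> ball 0 (min \<delta> \<epsilon>)" for x
    using that U_eq u_eq by simp
  obtain L where "L holomorphic_on edisc (analytic_radius u)" "L 0 = 0"
      "log_solution \<gamma> b (edisc (analytic_radius u)) U L"
  proof (rule log_solution_exists[OF convex_edisc open_edisc \<open>0 \<in> edisc (analytic_radius u)\<close> U _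
        \<open>min \<delta> \<epsilon> > 0\<close> germ])
    show "1 - of_real b * U x \<noteq> 0" if "x \<in> edisc (analytic_radius u)" for x
      by (rule solution_avoids_branch_point[OF assms(1) U \<open>min \<delta> \<epsilon> > 0\<close> germ that])
  qed
  then show ?thesis
    using that pos radius(2) U \<open>\<delta> > 0\<close> U_eq unfolding continues_germ_def by blast
qed

section \<open>Singular points on the boundary circle\<close>

lemma not_tendsto_zero_imp_sequence:
  fixes f :: "'a::metric_space \<Rightarrow> 'b::real_normed_vector"
  assumes "\<not> (f \<longlongrightarrow> 0) (at a within S)"
  obtains \<epsilon> xs where "\<epsilon> > 0" "\<And>n. xs n \<in> S" "xs \<longlonglongrightarrow> a" "\<And>n. \<epsilon> \<le> norm (f (xs n))"
proof -
  obtain \<epsilon> where "\<epsilon> > 0" and "\<not> (\<forall>\<^sub>F x in at a within S. dist (f x) 0 < \<epsilon>)"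
    using assms unfolding tendsto_iff by blast
  then have far: "\<forall>d>0. \<exists>x\<in>S. dist x a < d \<and> \<epsilon> \<le> norm (f x)"
    unfolding eventually_at by (auto simp: not_less) (meson linorder_not_le)
  have "\<forall>n. \<exists>x. x \<in> S \<and> dist x a < inverse (Suc n) \<and> \<epsilon> \<le> norm (f x)"
    using far by (metis inverse_positive_iff_positive of_nat_0_less_iff zero_less_Suc)
  then obtain xs where xs: "\<And>n. xs n \<in> S" "\<And>n. dist (xs n) a < inverse (Suc n)"
      "\<And>n. \<epsilon> \<le> norm (f (xs n))"
    by metis
  have "(\<lambda>n. dist (xs n) a) \<longlonglongrightarrow> 0"
  proof (rule tendsto_sandwich[OF _ _ tendsto_const LIMSEQ_inverse_real_of_nat])
    show "\<forall>\<^sub>F n in sequentially. dist (xs n) a \<le> inverse (real (Suc n))"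
      using xs(2) by (simp add: less_imp_le)
  qed simp
  then have "xs \<longlonglongrightarrow> a"
    by (rule tendsto_dist_iff[THEN iffD2])
  then show ?thesis
    by (rule that[OF \<open>\<epsilon> > 0\<close> xs(1) _ xs(3)])
qed

lemma local_log_branch:
  fixes f :: "complex \<Rightarrow> complex"
  assumes f: "f holomorphic_on S" "open S" "z \<in> S" and "exp l = f z"
  obtains V Lf where "open V" "z \<in> V" "V \<subseteq> S" "Lf holomorphic_on V"
    "\<And>w. w \<in> V \<Longrightarrow> exp (Lf w) = f w" "Lf z = l"
proof -
  have "f z \<noteq> 0"
    using \<open>exp l = f z\<close> by (metis exp_not_eq_zero)
  have "open (S \<inter> f -` (- {0}))"
    using holomorphic_on_imp_continuous_on[OF f(1)] f(2) by (rule continuous_open_preimage) auto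
  moreover have "z \<in> S \<inter> f -` (- {0})"
    using f(3) \<open>f z \<noteq> 0\<close> by simp
  ultimately obtain r where "r > 0" and r: "ball z r \<subseteq> S \<inter> f -` (- {0})"
    by (rule openE)
  have "f holomorphic_on ball z r"
    using f(1) r by (auto intro: holomorphic_on_subset)
  moreover have "\<And>w. w \<in> ball z r \<Longrightarrow> f w \<noteq> 0"
    using r by auto
  ultimately obtain g where g: "g holomorphic_on ball z r" "\<And>w. w \<in> ball z r \<Longrightarrow> exp (g w) = f w"
    using holomorphic_logarithm_exists[of "ball z r" f z] \<open>r > 0\<close> by auto
  show ?thesis
  proof (rule that[of "ball z r" "\<lambda>w. g w - g z + l"])
    show "exp (g w - g z + l) = f w" if "w \<in> ball z r" for w
      using g(2)[OF that] g(2)[of z] \<open>r > 0\<close> \<open>exp l = f z\<close> \<open>f z \<noteq> 0\<close> by (simp add: exp_add exp_diff)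
  qed (use g(1) r \<open>r > 0\<close> in \<open>auto intro!: holomorphic_intros\<close>)
qed

lemma holomorphic_local_inverse:
  assumes X: "X holomorphic_on V" "open V" "u0 \<in> V" "deriv X u0 \<noteq> 0"
  obtains N \<delta> Y where "open N" "u0 \<in> N" "N \<subseteq> V" "\<delta> > 0"
    "Y holomorphic_on ball (X u0) \<delta>" "\<And>w. w \<in> N \<Longrightarrow> Y (X w) = w"
proof -
  obtain r where "r > 0" "ball u0 r \<subseteq> V" "open (X ` ball u0 r)" "inj_on X (ball u0 r)"
    using has_complex_derivative_locally_invertible[OF X(1,3,2,4)] by blast
  moreover obtain Y where "Y holomorphic_on X ` ball u0 r" "\<And>w. w \<in> ball u0 r \<Longrightarrow> Y (X w) = w"
    using holomorphic_has_inverse[of X "ball u0 r"] X(1) calculation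
    by (metis holomorphic_on_subset open_ball)
  moreover obtain \<delta> where "\<delta> > 0" "ball (X u0) \<delta> \<subseteq> X ` ball u0 r"
    using calculation(1,3) by (meson centre_in_ball imageI openE)
  ultimately show ?thesis
    using that[of "ball u0 r" \<delta> Y] by (auto intro: holomorphic_on_subset)
qed

lemma holomorphic_extension_from_overlap:
  assumes "U holomorphic_on A" "Y holomorphic_on B" "open A" "open B" "connected (A \<inter> B)"
    and "open T" "T \<noteq> {}" "T \<subseteq> A \<inter> B" "\<And>x. x \<in> T \<Longrightarrow> U x = Y x"
  shows "(\<lambda>z. if z \<in> A then U z else Y z) holomorphic_on A \<union> B"
proof (rule holomorphic_on_If_Un)
  show "U z = Y z" if "z \<in> A" "z \<in> B" for z
  proof (rule analytic_continuation_open[of T "A \<inter> B" U Y])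
    show "U holomorphic_on A \<inter> B" "Y holomorphic_on A \<inter> B"
      using assms(1,2) by (auto intro: holomorphic_on_subset)
  qed (use assms that in auto)
qed (use assms in auto)

definition X_branch :: "real \<Rightarrow> (complex \<Rightarrow> complex) \<Rightarrow> complex \<Rightarrow> complex"
  where "X_branch \<gamma> Lu = (\<lambda>w. w / (1 + of_real \<gamma> * w * Lu w))"

lemma holomorphic_on_X_branch:
  assumes "Lu holomorphic_on V" "\<And>w. w \<in> V \<Longrightarrow> 1 + of_real \<gamma> * w * Lu w \<noteq> 0"
  shows "X_branch \<gamma> Lu holomorphic_on V"
  unfolding X_branch_def
  by (rule holomorphic_on_divide) (use assms in \<open>auto intro!: holomorphic_intros\<close>)

lemma local_branch_of_log_one_minus:
  assumes "exp l0 = 1 - of_real b * u0" "1 + of_real \<gamma> * u0 * l0 \<noteq> 0"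
  obtains V Lu where "open V" "u0 \<in> V" "Lu holomorphic_on V"
    "\<And>w. w \<in> V \<Longrightarrow> exp (Lu w) = 1 - of_real b * w" "\<And>w. w \<in> V \<Longrightarrow> 1 + of_real \<gamma> * w * Lu w \<noteq> 0"
    "Lu u0 = l0"
proof -
  have "(\<lambda>w. 1 - of_real b * w) holomorphic_on UNIV"
    by (intro holomorphic_intros)
  then obtain V0 Lu where V0: "open V0" "u0 \<in> V0" and Lu: "Lu holomorphic_on V0"
    "\<And>w. w \<in> V0 \<Longrightarrow> exp (Lu w) = 1 - of_real b * w" "Lu u0 = l0"
    using open_UNIV UNIV_I assms(1) by (rule local_log_branch) blast
  define V where "V = V0 \<inter> (\<lambda>w. 1 + of_real \<gamma> * w * Lu w) -` (- {0})"
  have "open V"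
    unfolding V_def using holomorphic_on_imp_continuous_on[OF Lu(1)] V0(1)
    by (intro continuous_open_preimage) (auto intro!: continuous_intros)
  moreover have "u0 \<in> V"
    unfolding V_def using V0(2) Lu(3) assms(2) by simp
  moreover have "Lu holomorphic_on V"
    using Lu(1) unfolding V_def by (rule holomorphic_on_subset) auto
  moreover have "exp (Lu w) = 1 - of_real b * w" "1 + of_real \<gamma> * w * Lu w \<noteq> 0" if "w \<in> V" for w
    using that Lu(2) unfolding V_def by blast+
  ultimately show ?thesis
    using that Lu(3) by blast
qed

lemma X_branch_local_inverse:
  assumes V: "open V" "u0 \<in> V" and Lu: "Lu holomorphic_on V"
    and den: "\<And>w. w \<in> V \<Longrightarrow> 1 + of_real \<gamma> * w * Lu w \<noteq> 0"
    and "deriv (X_branch \<gamma> Lu) u0 \<noteq> 0"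
  obtains N \<delta> Y where "open N" "u0 \<in> N" "N \<subseteq> V" "\<And>w. w \<in> N \<Longrightarrow> Lu w \<in> ball (Lu u0) pi"
    "\<delta> > 0" "Y holomorphic_on ball (X_branch \<gamma> Lu u0) \<delta>" "\<And>w. w \<in> N \<Longrightarrow> Y (X_branch \<gamma> Lu w) = w"
proof -
  define V' where "V' = V \<inter> Lu -` ball (Lu u0) pi"
  have "open V'"
    unfolding V'_def using holomorphic_on_imp_continuous_on[OF Lu] V(1)
    by (rule continuous_open_preimage) simp
  have "u0 \<in> V'" "V' \<subseteq> V"
    unfolding V'_def using V(2) by auto
  have "Lu holomorphic_on V'"
    using Lu \<open>V' \<subseteq> V\<close> by (rule holomorphic_on_subset)
  then have "X_branch \<gamma> Lu holomorphic_on V'"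
    by (rule holomorphic_on_X_branch) (use den \<open>V' \<subseteq> V\<close> in blast)
  then obtain N \<delta> Y where "open N" "u0 \<in> N" "N \<subseteq> V'" "\<delta> > 0"
    "Y holomorphic_on ball (X_branch \<gamma> Lu u0) \<delta>" "\<And>w. w \<in> N \<Longrightarrow> Y (X_branch \<gamma> Lu w) = w"
    using \<open>open V'\<close> \<open>u0 \<in> V'\<close> assms(5) by (rule holomorphic_local_inverse) blast
  then show ?thesis
    using that[of N \<delta> Y] unfolding V'_def by blast
qed

locale disc_log_solution =
  fixes \<gamma> b R :: real and U L :: "complex \<Rightarrow> complex"
  assumes gamma_nonzero: "\<gamma> \<noteq> 0" and b_nonzero: "b \<noteq> 0" and R_pos: "R > 0"
    and U_holomorphic: "U holomorphic_on ball 0 R"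
    and L_holomorphic: "L holomorphic_on ball 0 R"
    and solution: "log_solution \<gamma> b (ball 0 R) U L"
begin

lemma at_boundary_nontrivial: "norm (x0::complex) = R \<Longrightarrow> at x0 within ball 0 R \<noteq> bot"
  using R_pos by (simp add: trivial_limit_within islimpt_ball)

lemma tendsto_L_if_U_tendsto_zero:
  assumes "norm x0 = R" and U0: "(U \<longlongrightarrow> 0) (at x0 within ball 0 R)"
  obtains c where "(L \<longlongrightarrow> c) (at x0 within ball 0 R)"
proof -
  have "((\<lambda>x. of_real b * U x) \<longlongrightarrow> 0) (at x0 within ball 0 R)"
    using U0 by (intro tendsto_mult_right_zero)
  then have "eventually (\<lambda>x. norm (of_real b * U x) < 1) (at x0 within ball 0 R)"
    by (auto simp: tendsto_iff)
  then obtain d where "d > 0"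
    and small: "\<forall>x\<in>ball 0 R. x \<noteq> x0 \<and> dist x x0 < d \<longrightarrow> norm (of_real b * U x) < 1"
    unfolding eventually_at by blast
  define W where "W = ball 0 R \<inter> ball x0 d"
  have "W \<subseteq> ball 0 R" "x0 \<notin> W"
    using assms(1) unfolding W_def by auto
  obtain c where c: "\<And>x. x \<in> W \<Longrightarrow> L x = Ln (1 - of_real b * U x) + c"
  proof (rule continuous_log_eq_Ln_plus_const)
    show "connected W"
      unfolding W_def by (simp add: convex_connected convex_Int)
    show "continuous_on W (\<lambda>x. of_real b * U x)" "continuous_on W L"
      using \<open>W \<subseteq> ball 0 R\<close> holomorphic_on_imp_continuous_on[OF U_holomorphic]
        holomorphic_on_imp_continuous_on[OF L_holomorphic]
      by (auto intro!: continuous_intros intro: continuous_on_subset)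
    show "exp (L x) = 1 - of_real b * U x" if "x \<in> W" for x
      using that solution \<open>W \<subseteq> ball 0 R\<close> unfolding log_solution_def by blast
    show "norm (of_real b * U x) < 1" if "x \<in> W" for x
    proof -
      have "x \<in> ball 0 R" "x \<noteq> x0" "dist x x0 < d"
        using that \<open>x0 \<notin> W\<close> unfolding W_def by (auto simp: dist_commute)
      then show ?thesis
        using small by blast
    qed
  qed (rule that)
  have "((\<lambda>x. Ln (1 - of_real b * U x) + c) \<longlongrightarrow> Ln (1 - of_real b * 0) + c) (at x0 within ball 0 R)"
    using U0 by (intro tendsto_intros) auto
  moreover have "eventually (\<lambda>x. Ln (1 - of_real b * U x) + c = L x) (at x0 within ball 0 R)"
    unfolding eventually_at using \<open>d > 0\<close> c by (auto simp: W_def dist_commute)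
  ultimately have "(L \<longlongrightarrow> c) (at x0 within ball 0 R)"
    by (simp add: Lim_transform_eventually)
  then show ?thesis
    by (rule that)
qed

lemma not_tendsto_zero_at_boundary:
  assumes "norm x0 = R"
  shows "\<not> (U \<longlongrightarrow> 0) (at x0 within ball 0 R)"
proof
  define F where "F = at x0 within ball 0 R"
  assume U0: "(U \<longlongrightarrow> 0) (at x0 within ball 0 R)"
  obtain c where L_lim: "(L \<longlongrightarrow> c) F"
    unfolding F_def using assms U0 by (rule tendsto_L_if_U_tendsto_zero)
  have "x0 \<noteq> 0"
    using assms R_pos by auto
  have "eventually (\<lambda>x. x \<in> ball 0 R) F"
    unfolding F_def by (simp add: eventually_at_filter)
  moreover have "eventually (\<lambda>x. x \<noteq> 0) F"
    unfolding F_def by (rule tendsto_imp_eventually_ne[OF tendsto_ident_at \<open>x0 \<noteq> 0\<close>])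
  ultimately have "eventually (\<lambda>x. x \<in> ball 0 R \<and> x \<noteq> 0) F"
    by (rule eventually_conj)
  then have "eventually (\<lambda>x. U x * (1 / x - of_real \<gamma> * L x) = 1) F"
    by (rule eventually_mono) (use log_solution_L_eq[OF solution] gamma_nonzero in auto)
  moreover have "((\<lambda>x. U x * (1 / x - of_real \<gamma> * L x)) \<longlongrightarrow> 0 * (1 / x0 - of_real \<gamma> * c)) F"
    using U0 L_lim \<open>x0 \<noteq> 0\<close> unfolding F_def by (intro tendsto_intros) auto
  ultimately have "((\<lambda>x. 1) \<longlongrightarrow> (0::complex)) F"
    by (simp add: Lim_transform_eventually)
  then have "(0::complex) = 1"
    using tendsto_unique[OF at_boundary_nontrivial[OF assms] _ tendsto_const] unfolding F_def by blast
  then show False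
    by simp
qed

lemma convergent_subsequence_if_bounded_below:
  assumes xs: "\<And>n. xs n \<in> ball 0 R" "xs \<longlonglongrightarrow> x0" and "x0 \<noteq> 0"
    and "\<epsilon> > 0" and big: "\<And>n. \<epsilon> \<le> norm (U (xs n))"
  obtains r u0 where "strict_mono r" "(\<lambda>n. U (xs (r n))) \<longlonglongrightarrow> u0" "u0 \<noteq> 0"
proof -
  have "bounded (range (\<lambda>n. 1 / U (xs n)))"
    unfolding bounded_iff
    using big \<open>\<epsilon> > 0\<close> by (intro exI[of _ "1 / \<epsilon>"]) (auto simp: norm_divide intro!: frac_le)
  then obtain r v where r: "strict_mono r" and v: "(\<lambda>n. 1 / U (xs (r n))) \<longlonglongrightarrow> v"
    using bounded_imp_convergent_subsequence unfolding comp_def by blast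
  have U_nonzero: "U (xs n) \<noteq> 0" for n
    using big[of n] \<open>\<epsilon> > 0\<close> by auto
  then have "xs n \<noteq> 0" for n
    using solution xs(1)[of n] unfolding log_solution_def by (metis mult_zero_left)
  then have "L (xs n) = (1 / xs n - 1 / U (xs n)) / of_real \<gamma>" for n
    using log_solution_L_eq(2)[OF solution xs(1) _ gamma_nonzero] by blast
  moreover have "(\<lambda>n. (1 / xs (r n) - 1 / U (xs (r n))) / of_real \<gamma>) \<longlonglongrightarrow> (1 / x0 - v) / of_real \<gamma>"
    using LIMSEQ_subseq_LIMSEQ[OF xs(2) r] v \<open>x0 \<noteq> 0\<close> gamma_nonzero
    by (intro tendsto_intros) (auto simp: comp_def)
  ultimately have "(\<lambda>n. exp (L (xs (r n)))) \<longlonglongrightarrow> exp ((1 / x0 - v) / of_real \<gamma>)"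
    by (simp add: tendsto_exp)
  then have "(\<lambda>n. (1 - exp (L (xs (r n)))) / of_real b) \<longlonglongrightarrow> (1 - exp ((1 / x0 - v) / of_real \<gamma>)) / of_real b"
    by (intro tendsto_divide tendsto_diff tendsto_const) (simp_all add: b_nonzero)
  moreover have "(1 - exp (L (xs n))) / of_real b = U (xs n)" for n
    using solution xs(1) b_nonzero unfolding log_solution_def by simp
  ultimately have U_lim: "(\<lambda>n. U (xs (r n))) \<longlonglongrightarrow> (1 - exp ((1 / x0 - v) / of_real \<gamma>)) / of_real b"
    by simp
  moreover have "\<epsilon> \<le> norm ((1 - exp ((1 / x0 - v) / of_real \<gamma>)) / of_real b)"
    using big by (intro tendsto_lowerbound[OF tendsto_norm[OF U_lim]]) simp_all
  ultimately show ?thesis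
    using that r \<open>\<epsilon> > 0\<close> by force
qed

lemma boundary_cluster_value:
  assumes "norm x0 = R"
  obtains xs u0 where "\<And>n. xs n \<in> ball 0 R" "xs \<longlonglongrightarrow> x0" "(\<lambda>n. U (xs n)) \<longlonglongrightarrow> u0" "u0 \<noteq> 0"
proof -
  obtain \<epsilon> ys where "\<epsilon> > 0" and ys: "\<And>n. ys n \<in> ball 0 R" "ys \<longlonglongrightarrow> x0"
    and big: "\<And>n. \<epsilon> \<le> norm (U (ys n))"
    using not_tendsto_zero_imp_sequence[OF not_tendsto_zero_at_boundary[OF assms]] by blast
  have "x0 \<noteq> 0"
    using assms R_pos by auto
  obtain r u0 where "strict_mono r" "(\<lambda>n. U (ys (r n))) \<longlonglongrightarrow> u0" "u0 \<noteq> 0"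
    using ys \<open>x0 \<noteq> 0\<close> \<open>\<epsilon> > 0\<close> big by (rule convergent_subsequence_if_bounded_below)
  then show ?thesis
    using that[of "ys \<circ> r" u0] ys LIMSEQ_subseq_LIMSEQ[OF ys(2)] by (simp add: comp_def)
qed

lemma X_branch_inverts_U:
  assumes "x \<in> ball 0 R" "U x \<in> V" "\<And>w. w \<in> V \<Longrightarrow> exp (Lu w) = 1 - of_real b * w"
    and "L x \<in> ball l0 pi" "Lu (U x) \<in> ball l0 pi"
  shows "X_branch \<gamma> Lu (U x) = x"
proof -
  have "exp (L x) = exp (Lu (U x))"
    using solution assms(1-3) unfolding log_solution_def by simp
  then have "L x = Lu (U x)"
    using inj_on_exp_pi[of l0] assms(4,5) unfolding inj_on_def by blast
  then show ?thesis
    using log_solution_inverse[OF solution assms(1)] unfolding X_branch_def by simp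
qed

lemma extends_across_regular_point:
  assumes xs: "\<And>n. xs n \<in> ball 0 R" "xs \<longlonglongrightarrow> x0" "(\<lambda>n. U (xs n)) \<longlonglongrightarrow> u0"
      "(\<lambda>n. L (xs n)) \<longlonglongrightarrow> Lu u0"
    and V: "open V" "u0 \<in> V" and Lu: "Lu holomorphic_on V" "\<And>w. w \<in> V \<Longrightarrow> exp (Lu w) = 1 - of_real b * w"
    and den: "\<And>w. w \<in> V \<Longrightarrow> 1 + of_real \<gamma> * w * Lu w \<noteq> 0"
    and X: "X_branch \<gamma> Lu u0 = x0" "deriv (X_branch \<gamma> Lu) u0 \<noteq> 0"
  shows "\<exists>\<epsilon>>0. \<exists>g. g holomorphic_on (ball 0 R \<union> ball x0 \<epsilon>) \<and> (\<forall>x\<in>ball 0 R. g x = U x)"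
proof -
  obtain N \<delta> Y where N: "open N" "u0 \<in> N" "N \<subseteq> V" "\<And>w. w \<in> N \<Longrightarrow> Lu w \<in> ball (Lu u0) pi"
    and "\<delta> > 0" and Y: "Y holomorphic_on ball x0 \<delta>" "\<And>w. w \<in> N \<Longrightarrow> Y (X_branch \<gamma> Lu w) = w"
    using X_branch_local_inverse[OF V Lu(1) den X(2)] unfolding X(1) by blast
  define W where "W = ball 0 R \<inter> ball x0 \<delta>"
  define T where "T = (W \<inter> U -` N) \<inter> (W \<inter> L -` ball (Lu u0) pi)"
  have "W \<subseteq> ball 0 R" "open W"
    unfolding W_def by auto
  have "open T"
    unfolding T_def using \<open>W \<subseteq> ball 0 R\<close> \<open>open W\<close> N(1)
      holomorphic_on_imp_continuous_on[OF U_holomorphic] holomorphic_on_imp_continuous_on[OF L_holomorphic]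
    by (intro open_Int continuous_open_preimage) (auto intro: continuous_on_subset)
  have "eventually (\<lambda>n. xs n \<in> ball x0 \<delta>) sequentially"
    by (rule topological_tendstoD[OF xs(2)]) (use \<open>\<delta> > 0\<close> in auto)
  moreover have "eventually (\<lambda>n. U (xs n) \<in> N) sequentially"
    using xs(3) N(1,2) by (rule topological_tendstoD)
  moreover have "eventually (\<lambda>n. L (xs n) \<in> ball (Lu u0) pi) sequentially"
    by (rule topological_tendstoD[OF xs(4)]) auto
  ultimately have "eventually (\<lambda>n. xs n \<in> T) sequentially"
    unfolding T_def W_def by eventually_elim (use xs(1) in auto)
  then have "T \<noteq> {}"
    using eventually_happens'[OF trivial_limit_sequentially] by blast
  have "U x = Y x" if "x \<in> T" for x
  proof -
    have "x \<in> ball 0 R" "U x \<in> N" "L x \<in> ball (Lu u0) pi"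
      using that \<open>W \<subseteq> ball 0 R\<close> unfolding T_def by auto
    then show "U x = Y x"
      using X_branch_inverts_U[of x V Lu "Lu u0"] N(3,4) Lu(2) Y(2) by (metis subsetD)
  qed
  then have "(\<lambda>z. if z \<in> ball 0 R then U z else Y z) holomorphic_on ball 0 R \<union> ball x0 \<delta>"
    using U_holomorphic Y(1) \<open>open T\<close> \<open>T \<noteq> {}\<close>
    by (intro holomorphic_extension_from_overlap[where T = T])
      (auto simp: T_def W_def convex_connected convex_Int)
  then show ?thesis
    using \<open>\<delta> > 0\<close> by (intro exI[of _ \<delta>] exI[of _ "\<lambda>z. if z \<in> ball 0 R then U z else Y z"]) auto
qed

lemma boundary_branch:
  assumes "norm x0 = R"
  obtains xs u0 Lu V where "\<And>n. xs n \<in> ball 0 R" "xs \<longlonglongrightarrow> x0" "(\<lambda>n. U (xs n)) \<longlonglongrightarrow> u0"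
    "(\<lambda>n. L (xs n)) \<longlonglongrightarrow> Lu u0" "u0 \<noteq> 0" "u0 \<noteq> 1 / of_real b"
    "open V" "u0 \<in> V" "Lu holomorphic_on V" "\<And>w. w \<in> V \<Longrightarrow> exp (Lu w) = 1 - of_real b * w"
    "\<And>w. w \<in> V \<Longrightarrow> 1 + of_real \<gamma> * w * Lu w \<noteq> 0" "X_branch \<gamma> Lu u0 = x0"
proof -
  obtain xs u0 where xs: "\<And>n. xs n \<in> ball 0 R" "xs \<longlonglongrightarrow> x0" "(\<lambda>n. U (xs n)) \<longlonglongrightarrow> u0"
    and "u0 \<noteq> 0"
    using boundary_cluster_value[OF assms] by blast
  have "x0 \<noteq> 0"
    using assms R_pos by auto
  define l0 where "l0 = (1 / x0 - 1 / u0) / of_real \<gamma>"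
  have L_lim: "(\<lambda>n. L (xs n)) \<longlonglongrightarrow> l0" and exp_l0: "exp l0 = 1 - of_real b * u0"
    unfolding l0_def
    using log_solution_tendsto[OF solution gamma_nonzero trivial_limit_sequentially _ xs(2,3)]
      xs(1) \<open>x0 \<noteq> 0\<close> \<open>u0 \<noteq> 0\<close> by auto
  have "u0 \<noteq> 1 / of_real b"
    using exp_l0 b_nonzero by (auto simp: field_simps)
  have den0: "1 + of_real \<gamma> * u0 * l0 = u0 / x0"
    unfolding l0_def using gamma_nonzero \<open>x0 \<noteq> 0\<close> \<open>u0 \<noteq> 0\<close> by (simp add: field_simps)
  then have "1 + of_real \<gamma> * u0 * l0 \<noteq> 0"
    using \<open>x0 \<noteq> 0\<close> \<open>u0 \<noteq> 0\<close> by simp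
  obtain V Lu where V: "open V" "u0 \<in> V" and Lu: "Lu holomorphic_on V"
    "\<And>w. w \<in> V \<Longrightarrow> exp (Lu w) = 1 - of_real b * w" "\<And>w. w \<in> V \<Longrightarrow> 1 + of_real \<gamma> * w * Lu w \<noteq> 0"
    "Lu u0 = l0"
    by (rule local_branch_of_log_one_minus[OF exp_l0 \<open>1 + of_real \<gamma> * u0 * l0 \<noteq> 0\<close>], rule that)
  have "X_branch \<gamma> Lu u0 = x0"
    unfolding X_branch_def by (simp only: Lu(4) den0) (simp add: \<open>u0 \<noteq> 0\<close>)
  then show ?thesis
    using that[OF xs _ \<open>u0 \<noteq> 0\<close> \<open>u0 \<noteq> 1 / of_real b\<close> V Lu(1-3)] L_lim Lu(4) by simp
qed

lemma singular_boundary_point_is_critical: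
  assumes "norm x0 = R"
    and no_ext: "\<not> (\<exists>\<epsilon>>0. \<exists>g. g holomorphic_on (ball 0 R \<union> ball x0 \<epsilon>) \<and> (\<forall>x\<in>ball 0 R. g x = U x))"
  shows "\<exists>u0 Lu V xs.
    u0 \<noteq> 0 \<and> u0 \<noteq> 1 / of_real b \<and>
    open V \<and> u0 \<in> V \<and> Lu holomorphic_on V \<and> (\<forall>w\<in>V. exp (Lu w) = 1 - of_real b * w) \<and>
    (\<forall>n. xs n \<in> ball 0 R) \<and> xs \<longlonglongrightarrow> x0 \<and> (\<lambda>n. U (xs n)) \<longlonglongrightarrow> u0 \<and> (\<lambda>n. L (xs n)) \<longlonglongrightarrow> Lu u0 \<and>
    (let X = (\<lambda>w. w / (1 + of_real \<gamma> * w * Lu w)) in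
       X u0 = x0 \<and> x0 \<noteq> 0 \<and> (X has_field_derivative 0) (at u0))"
proof -
  obtain xs u0 Lu V where xs: "\<And>n. xs n \<in> ball 0 R" "xs \<longlonglongrightarrow> x0" "(\<lambda>n. U (xs n)) \<longlonglongrightarrow> u0"
      "(\<lambda>n. L (xs n)) \<longlonglongrightarrow> Lu u0"
    and u0: "u0 \<noteq> 0" "u0 \<noteq> 1 / of_real b"
    and V: "open V" "u0 \<in> V" and Lu: "Lu holomorphic_on V" "\<And>w. w \<in> V \<Longrightarrow> exp (Lu w) = 1 - of_real b * w"
    and den: "\<And>w. w \<in> V \<Longrightarrow> 1 + of_real \<gamma> * w * Lu w \<noteq> 0" and X: "X_branch \<gamma> Lu u0 = x0"
    by (rule boundary_branch[OF assms(1)], rule that)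
  have "x0 \<noteq> 0"
    using assms(1) R_pos by auto
  have "X_branch \<gamma> Lu holomorphic_on V"
    using Lu(1) den by (rule holomorphic_on_X_branch)
  then have "(X_branch \<gamma> Lu has_field_derivative deriv (X_branch \<gamma> Lu) u0) (at u0)"
    using V by (rule holomorphic_derivI)
  moreover have "deriv (X_branch \<gamma> Lu) u0 = 0"
  proof (rule ccontr)
    assume "deriv (X_branch \<gamma> Lu) u0 \<noteq> 0"
    from extends_across_regular_point[OF xs V Lu den X this] no_ext show False
      by contradiction
  qed
  ultimately have "(X_branch \<gamma> Lu has_field_derivative 0) (at u0)"
    by simp
  then show ?thesis
    unfolding Let_def X_branch_def[symmetric] using xs u0 V Lu X \<open>x0 \<noteq> 0\<close>
    by (intro exI[of _ u0] exI[of _ Lu] exI[of _ V] exI[of _ xs] conjI ballI allI) simp_all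
qed

end

theorem proposition6p4:
  fixes \<gamma> b :: real and u :: "complex \<Rightarrow> complex"
  assumes "\<gamma> > 0" and "0 < b" and "b < 1"
    and "is_sol_germ \<gamma> b u"
  shows "\<exists>U L.
     U holomorphic_on edisc (analytic_radius u) \<and>
     (\<exists>\<delta>>0. \<forall>x\<in>ball 0 \<delta>. U x = u x) \<and>
     L holomorphic_on edisc (analytic_radius u) \<and> L 0 = 0 \<and>
     (\<forall>x\<in>edisc (analytic_radius u).
        1 - of_real b * U x \<noteq> 0 \<and>
        exp (L x) = 1 - of_real b * U x \<and>
        x = U x / (1 + of_real \<gamma> * U x * L x)) \<and>
     (analytic_radius u < \<infinity> \<longrightarrow>
       (\<forall>x0. ereal (cmod x0) = analytic_radius u \<and>
          \<not> (\<exists>\<epsilon>>0. \<exists>g. g holomorphic_on (edisc (analytic_radius u) \<union> ball x0 \<epsilon>) \<and>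
                (\<forall>x\<in>edisc (analytic_radius u). g x = U x))
        \<longrightarrow>
          (\<exists>u0 Lu V xs.
             u0 \<noteq> 0 \<and> u0 \<noteq> 1 / of_real b \<and>
             open V \<and> u0 \<in> V \<and> Lu holomorphic_on V \<and>
             (\<forall>w\<in>V. exp (Lu w) = 1 - of_real b * w) \<and>
             (\<forall>n. xs n \<in> edisc (analytic_radius u)) \<and>
             xs \<longlonglongrightarrow> x0 \<and> (\<lambda>n. U (xs n)) \<longlonglongrightarrow> u0 \<and>
             (\<lambda>n. L (xs n)) \<longlonglongrightarrow> Lu u0 \<and>
             (let X = (\<lambda>w. w / (1 + of_real \<gamma> * w * Lu w)) in
                X u0 = x0 \<and> x0 \<noteq> 0 \<and> (X has_field_derivative 0) (at u0)))))"
proof -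
  have "\<gamma> \<noteq> 0"
    using assms(1) by simp
  then obtain U L where pos: "analytic_radius u > 0" and U: "continues_germ u (edisc (analytic_radius u)) U"
    and L: "L holomorphic_on edisc (analytic_radius u)" "L 0 = 0"
    and sol: "log_solution \<gamma> b (edisc (analytic_radius u)) U L"
    using assms(4) by (rule solution_on_analytic_disc)
  note pointwise = log_solution_pointwise[OF sol]
  show ?thesis
  proof (cases "analytic_radius u")
    case (real R)
    interpret disc_log_solution \<gamma> b R U L
      using assms(1,2) real pos U L(1) sol
      by unfold_locales (auto simp: edisc_ereal continues_germ_def)
    show ?thesis
      unfolding real edisc_ereal
      by (rule exI[of _ U], rule exI[of _ L], intro conjI impI allI; (elim conjE)?;
          (rule singular_boundary_point_is_critical)?)
        (use U L pointwise in \<open>auto simp: real edisc_ereal continues_germ_def\<close>)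
  qed (use U L pointwise pos in \<open>auto simp: continues_germ_def\<close>)
qed

end
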